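(* Let $\Lambda<\Gamma$, let $\mathcal R$ be a set of representatives of the cosets $\Lambda\gamma$ with $e\in\mathcal R$, and let $\mathcal H$ be a Hilbert space. For maps $\mu,\mu_1,\mu_2:\Lambda\to U(\mathcal H)$ with induced maps $\overline\mu,\overline\mu_1,\overline\mu_2:\Gamma\to U(\ell^2(\mathcal R,\mathcal H))$ one has: (1) $\mathrm{def}(\overline\mu)=\mathrm{def}(\mu)$; (2) $\|\overline\mu_1-\overline\mu_2\|=\|\mu_1-\mu_2\|$; (3) $D(\overline\mu)\le D(\mu)$.
   Context: Let $r:\Gamma\to\mathcal R$ be the retraction $r(\gamma)=$ the unique element of $\Lambda\gamma\cap\mathcal R$. For $\mu:\Lambda\to U(\mathcal H)$ the induced map $\overline\mu:\Gamma\to U(\ell^2(\mathcal R,\mathcal H))$ is $(\overline\mu(\gamma)f)(x)=\mu(x\gamma\, r(x\gamma)^{-1})\,f(r(x\gamma))$ for $f\in\ell^2(\mathcal R,\mathcal H)$, $x\in\mathcal R$. For maps into $U(\mathcal L)$: $\|\mu-\nu\|=\sup_\gamma\|\mu(\gamma)-\nu(\gamma)\|$ (operator norm), $D(\mu)=\inf\{\|\mu-\nu\|:\nu$ a unitary representation on the same space$\}$, $\mathrm{def}(\mu)=\sup_{x,y}\|\mu(xy)-\mu(x)\mu(y)\|$. *)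

theory Defs
  imports "HOL-Analysis.Analysis" "HOL-Algebra.Coset"
begin

text \<open>A (real) normed space given explicitly by its carrier, operations, norm and a
  complex structure J (multiplication by i).  A complex Hilbert space is modelled as a real
  Hilbert space together with such a J; complex-linear maps are the real-linear maps
  commuting with J.\<close>

record 'v nspace =
  vcarrier :: "'v set"
  vadd :: "'v \<Rightarrow> 'v \<Rightarrow> 'v"
  vscale :: "real \<Rightarrow> 'v \<Rightarrow> 'v"
  vsub :: "'v \<Rightarrow> 'v \<Rightarrow> 'v"
  vnorm :: "'v \<Rightarrow> real"
  vJ :: "'v \<Rightarrow> 'v"

definition complex_structure :: "('h::real_inner \<Rightarrow> 'h) \<Rightarrow> bool" where
  "complex_structure J \<longleftrightarrow> linear J \<and> (\<forall>x. J (J x) = - x) \<and> (\<forall>x y. inner (J x) (J y) = inner x y)"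

definition H_sp :: "('h::real_normed_vector \<Rightarrow> 'h) \<Rightarrow> 'h nspace" where
  "H_sp J = \<lparr>vcarrier = UNIV, vadd = (+), vscale = scaleR, vsub = (-), vnorm = norm, vJ = J\<rparr>"

definition l2space :: "'g set \<Rightarrow> ('g \<Rightarrow> 'h::real_normed_vector) set" where
  "l2space R = {f. (\<forall>x. x \<notin> R \<longrightarrow> f x = 0) \<and> (\<lambda>x. (norm (f x))\<^sup>2) summable_on R}"

definition l2norm :: "'g set \<Rightarrow> ('g \<Rightarrow> 'h::real_normed_vector) \<Rightarrow> real" where
  "l2norm R f = sqrt (\<Sum>\<^sub>\<infinity>x\<in>R. (norm (f x))\<^sup>2)"

definition l2_sp :: "'g set \<Rightarrow> ('h::real_normed_vector \<Rightarrow> 'h) \<Rightarrow> ('g \<Rightarrow> 'h) nspace" where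
  "l2_sp R J = \<lparr>vcarrier = l2space R, vadd = (\<lambda>f g x. f x + g x), vscale = (\<lambda>c f x. c *\<^sub>R f x),
      vsub = (\<lambda>f g x. f x - g x), vnorm = l2norm R, vJ = (\<lambda>f x. J (f x))\<rparr>"

definition unitary_op :: "('v, 'm) nspace_scheme \<Rightarrow> ('v \<Rightarrow> 'v) \<Rightarrow> bool" where
  "unitary_op V U \<longleftrightarrow> U ` vcarrier V = vcarrier V
     \<and> (\<forall>x\<in>vcarrier V. \<forall>y\<in>vcarrier V. U (vadd V x y) = vadd V (U x) (U y))
     \<and> (\<forall>c. \<forall>x\<in>vcarrier V. U (vscale V c x) = vscale V c (U x))
     \<and> (\<forall>x\<in>vcarrier V. U (vJ V x) = vJ V (U x))
     \<and> (\<forall>x\<in>vcarrier V. vnorm V (U x) = vnorm V x)"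

definition op_dist :: "('v, 'm) nspace_scheme \<Rightarrow> ('v \<Rightarrow> 'v) \<Rightarrow> ('v \<Rightarrow> 'v) \<Rightarrow> real" where
  "op_dist V U W = Sup ((\<lambda>v. vnorm V (vsub V (U v) (W v))) ` {v \<in> vcarrier V. vnorm V v \<le> 1})"

definition map_dist :: "('v, 'm) nspace_scheme \<Rightarrow> ('g, 'b) monoid_scheme
    \<Rightarrow> ('g \<Rightarrow> 'v \<Rightarrow> 'v) \<Rightarrow> ('g \<Rightarrow> 'v \<Rightarrow> 'v) \<Rightarrow> real" where
  "map_dist V K \<mu> \<nu> = Sup ((\<lambda>g. op_dist V (\<mu> g) (\<nu> g)) ` carrier K)"

definition defect :: "('v, 'm) nspace_scheme \<Rightarrow> ('g, 'b) monoid_scheme \<Rightarrow> ('g \<Rightarrow> 'v \<Rightarrow> 'v) \<Rightarrow> real" where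
  "defect V K \<mu> = Sup ((\<lambda>(x, y). op_dist V (\<mu> (x \<otimes>\<^bsub>K\<^esub> y)) (\<mu> x \<circ> \<mu> y)) ` (carrier K \<times> carrier K))"

definition unitary_rep :: "('v, 'm) nspace_scheme \<Rightarrow> ('g, 'b) monoid_scheme \<Rightarrow> ('g \<Rightarrow> 'v \<Rightarrow> 'v) \<Rightarrow> bool" where
  "unitary_rep V K \<nu> \<longleftrightarrow> (\<forall>g\<in>carrier K. unitary_op V (\<nu> g))
     \<and> (\<forall>x\<in>carrier K. \<forall>y\<in>carrier K. \<forall>v\<in>vcarrier V. \<nu> (x \<otimes>\<^bsub>K\<^esub> y) v = \<nu> x (\<nu> y v))"

definition dist_rep :: "('v, 'm) nspace_scheme \<Rightarrow> ('g, 'b) monoid_scheme \<Rightarrow> ('g \<Rightarrow> 'v \<Rightarrow> 'v) \<Rightarrow> real" where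
  "dist_rep V K \<mu> = Inf ((\<lambda>\<nu>. map_dist V K \<mu> \<nu>) ` {\<nu>. unitary_rep V K \<nu>})"

definition coset_retr :: "('g, 'b) monoid_scheme \<Rightarrow> 'g set \<Rightarrow> 'g set \<Rightarrow> 'g \<Rightarrow> 'g" where
  "coset_retr G L R g = (THE r. r \<in> R \<and> r \<in> L #>\<^bsub>G\<^esub> g)"

definition induced :: "('g, 'b) monoid_scheme \<Rightarrow> 'g set \<Rightarrow> 'g set
    \<Rightarrow> ('g \<Rightarrow> 'h \<Rightarrow> 'h::zero) \<Rightarrow> 'g \<Rightarrow> ('g \<Rightarrow> 'h) \<Rightarrow> ('g \<Rightarrow> 'h)" where
  "induced G L R \<mu> \<gamma> f = (\<lambda>x. if x \<in> R then
      \<mu> (x \<otimes>\<^bsub>G\<^esub> \<gamma> \<otimes>\<^bsub>G\<^esub> inv\<^bsub>G\<^esub> (coset_retr G L R (x \<otimes>\<^bsub>G\<^esub> \<gamma>)))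
        (f (coset_retr G L R (x \<otimes>\<^bsub>G\<^esub> \<gamma>)))
    else 0)"

end

theory Submission
  imports Defs
begin

(* With the cocycle c(x,g) = x g r(x g)^-1 and the permutation sigma_g(x) = r(x g) of R, the
   induced operator is (mu-bar(g) f)(x) = mu(c(x,g)) f(sigma_g x): a permutation of coordinates
   twisted by the unitaries mu(c(x,g)).  The key estimate concerns a
   twisted shift (U f - W f)(x) = (A_x - B_x) f(sigma x): its norm lies between ||A_e - B_e||
   (test on functions supported at e) and sup_x ||A_x - B_x||.  Both mu-bar(g d) -
   mu-bar(g) mu-bar(d) and mu1-bar(g) - mu2-bar(g) are twisted shifts whose coefficients are
   values of mu(a b) - mu(a) mu(b), resp. mu1(l) - mu2(l), all of which occur at x = e; this
   gives (1) and (2).  For (3), inducing a unitary representation nu of L gives one of G, at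
   distance ||mu - nu|| from mu-bar by (2). *)

section \<open>A transversal of the right cosets of a subgroup\<close>

locale coset_transversal = group G for G :: "('g, 'b) monoid_scheme" (structure) +
  fixes L R :: "'g set"
  assumes subgroup_L: "subgroup L G"
    and R_carrier: "R \<subseteq> carrier G"
    and unique_rep: "\<forall>g\<in>carrier G. \<exists>!r. r \<in> R \<and> r \<in> L #> g"
    and one_in_R: "\<one> \<in> R"
begin

abbreviation retr :: "'g \<Rightarrow> 'g" where "retr g \<equiv> coset_retr G L R g"

abbreviation cocycle :: "'g \<Rightarrow> 'g \<Rightarrow> 'g" where "cocycle x g \<equiv> x \<otimes> g \<otimes> inv retr (x \<otimes> g)"

lemma L_carrier: "l \<in> L \<Longrightarrow> l \<in> carrier G"
  by (rule subgroup.mem_carrier[OF subgroup_L])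

lemma R_carrier': "x \<in> R \<Longrightarrow> x \<in> carrier G"
  using R_carrier by blast

lemma one_in_L: "\<one> \<in> L"
  by (rule subgroup.one_closed[OF subgroup_L])

lemma L_mult: "a \<in> L \<Longrightarrow> b \<in> L \<Longrightarrow> a \<otimes> b \<in> L"
  by (rule subgroup.m_closed[OF subgroup_L])

lemma L_inv: "a \<in> L \<Longrightarrow> inv a \<in> L"
  by (rule subgroup.m_inv_closed[OF subgroup_L])

lemma in_r_coset: "y \<in> L #> g \<longleftrightarrow> (\<exists>l\<in>L. y = l \<otimes> g)"
  unfolding r_coset_def by auto

lemma retr_spec: "g \<in> carrier G \<Longrightarrow> retr g \<in> R \<and> retr g \<in> L #> g"
  using unique_rep theI'[of "\<lambda>r. r \<in> R \<and> r \<in> L #> g"] by (simp add: coset_retr_def)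

lemma retr_unique: "g \<in> carrier G \<Longrightarrow> y \<in> R \<Longrightarrow> y \<in> L #> g \<Longrightarrow> retr g = y"
  unfolding coset_retr_def using unique_rep by (intro the1_equality) auto

lemma retr_in_R: "g \<in> carrier G \<Longrightarrow> retr g \<in> R"
  using retr_spec by blast

lemma retr_carrier: "g \<in> carrier G \<Longrightarrow> retr g \<in> carrier G"
  using retr_in_R R_carrier by blast

lemma retr_R: "x \<in> R \<Longrightarrow> retr x = x"
  using R_carrier one_in_L
  by (intro retr_unique) (auto simp: in_r_coset intro!: bexI[of _ \<one>])

lemma retr_L: assumes "l \<in> L" shows "retr l = \<one>"
proof (rule retr_unique)
  show "\<one> \<in> L #> l"
    using assms L_carrier L_inv by (auto simp: in_r_coset intro!: bexI[of _ "inv l"])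
qed (use assms L_carrier one_in_R in auto)

text \<open>The retraction is constant on right cosets, hence equivariant for right multiplication.\<close>

lemma retr_retr_mult:
  assumes g: "g \<in> carrier G" and d: "d \<in> carrier G"
  shows "retr (retr g \<otimes> d) = retr (g \<otimes> d)"
proof (rule retr_unique)
  obtain l where l: "l \<in> L" "retr g = l \<otimes> g"
    using retr_spec[OF g] in_r_coset by blast
  obtain l' where l': "l' \<in> L" "retr (g \<otimes> d) = l' \<otimes> (g \<otimes> d)"
    using retr_spec g d in_r_coset by blast
  have "retr (g \<otimes> d) = (l' \<otimes> inv l) \<otimes> (retr g \<otimes> d)"
    using l l' g d L_carrier by (simp add: m_assoc[symmetric] inv_mult_group) (simp add: m_assoc)
  then show "retr (g \<otimes> d) \<in> L #> (retr g \<otimes> d)"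
    using l l' L_mult L_inv by (auto simp: in_r_coset)
qed (use g d retr_carrier retr_in_R in auto)

lemma cocycle_in_L:
  assumes x: "x \<in> R" and g: "g \<in> carrier G"
  shows "cocycle x g \<in> L"
proof -
  have xg: "x \<otimes> g \<in> carrier G" using x g R_carrier' by simp
  obtain l where l: "l \<in> L" "retr (x \<otimes> g) = l \<otimes> (x \<otimes> g)"
    using retr_spec[OF xg] in_r_coset by blast
  have "cocycle x g = inv l"
    using l xg L_carrier by (simp add: inv_mult_group m_assoc[symmetric])
  then show ?thesis using l L_inv by simp
qed

lemma cocycle_mult:
  assumes x: "x \<in> R" and g: "g \<in> carrier G" and d: "d \<in> carrier G"
  shows "cocycle x g \<otimes> cocycle (retr (x \<otimes> g)) d = cocycle x (g \<otimes> d)"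
proof -
  have xc: "x \<in> carrier G" using x R_carrier' by simp
  have r: "retr (retr (x \<otimes> g) \<otimes> d) = retr (x \<otimes> (g \<otimes> d))"
    using retr_retr_mult xc g d by (simp add: m_assoc)
  have cancel: "inv a \<otimes> (a \<otimes> z) = z" if "a \<in> carrier G" "z \<in> carrier G" for a z
    using that by (simp add: m_assoc[symmetric])
  show ?thesis unfolding r using xc g d retr_carrier by (simp add: m_assoc cancel)
qed

lemma cocycle_one_L: "l \<in> L \<Longrightarrow> cocycle \<one> l = l"
  using L_carrier retr_L by simp

lemma retr_one_L: "l \<in> L \<Longrightarrow> retr (\<one> \<otimes> l) = \<one>"
  using L_carrier retr_L by simp

lemma retr_mult_eq_one_iff:
  assumes x: "x \<in> R" and l: "l \<in> L"
  shows "retr (x \<otimes> l) = \<one> \<longleftrightarrow> x = \<one>"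
proof
  assume "retr (x \<otimes> l) = \<one>"
  have xc: "x \<in> carrier G" using x R_carrier' by simp
  have "x \<otimes> l \<in> L"
    using cocycle_in_L[OF x L_carrier[OF l]] \<open>retr (x \<otimes> l) = \<one>\<close> xc l L_carrier by simp
  then have "x \<otimes> l \<otimes> inv l \<in> L" using l L_mult L_inv by blast
  then have "x \<in> L" using xc l L_carrier by (simp add: m_assoc)
  then show "x = \<one>" using retr_L retr_R x by metis
qed (use l retr_one_L in simp)

lemma retr_mult_bij:
  assumes g: "g \<in> carrier G"
  shows "bij_betw (\<lambda>x. retr (x \<otimes> g)) R R"
proof (rule bij_betw_byWitness[where f'="\<lambda>x. retr (x \<otimes> inv g)"])
  have retr_back: "retr (retr (a \<otimes> h) \<otimes> inv h) = a" if "a \<in> R" "h \<in> carrier G" for a h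
  proof -
    have ac: "a \<in> carrier G" using that R_carrier' by simp
    have "retr (retr (a \<otimes> h) \<otimes> inv h) = retr (a \<otimes> h \<otimes> inv h)"
      using retr_retr_mult ac that by simp
    also have "a \<otimes> h \<otimes> inv h = a" using ac that by (simp add: m_assoc)
    finally show ?thesis using retr_R that by simp
  qed
  show "\<forall>a\<in>R. retr (retr (a \<otimes> g) \<otimes> inv g) = a" using retr_back g by blast
  show "\<forall>a\<in>R. retr (retr (a \<otimes> inv g) \<otimes> g) = a" using retr_back[of _ "inv g"] g by simp
  show "(\<lambda>x. retr (x \<otimes> g)) ` R \<subseteq> R" using g R_carrier' retr_in_R by auto
  show "(\<lambda>x. retr (x \<otimes> inv g)) ` R \<subseteq> R" using g R_carrier' retr_in_R by auto
qed

end

section \<open>Operator distance on the Hilbert space \<open>H\<close>\<close>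

text \<open>All estimates on \<open>H\<close> only use that unitaries are homogeneous and norm preserving.\<close>

definition homog_isometry :: "('h::real_normed_vector \<Rightarrow> 'h) \<Rightarrow> bool" where
  "homog_isometry A \<longleftrightarrow> (\<forall>c v. A (c *\<^sub>R v) = c *\<^sub>R A v) \<and> (\<forall>v. norm (A v) = norm v)"

lemma homog_isometry_zero: "homog_isometry A \<Longrightarrow> A 0 = 0"
  unfolding homog_isometry_def by (metis scaleR_zero_left)

lemma homog_isometry_comp: "homog_isometry A \<Longrightarrow> homog_isometry B \<Longrightarrow> homog_isometry (A \<circ> B)"
  unfolding homog_isometry_def by simp

lemma unitary_homog_isometry: "unitary_op (H_sp J) U \<Longrightarrow> homog_isometry U"
  by (simp add: unitary_op_def H_sp_def homog_isometry_def)

lemma H_op_dist: "op_dist (H_sp J) A B = Sup ((\<lambda>v. norm (A v - B v)) ` {v. norm v \<le> 1})"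
  by (simp add: op_dist_def H_sp_def)

lemma homog_isometry_diff_le:
  assumes "homog_isometry A" "homog_isometry B"
  shows "norm (A v - B v) \<le> 2 * norm v"
proof -
  have "norm (A v - B v) \<le> norm (A v) + norm (B v)" by (rule norm_triangle_ineq4)
  also have "\<dots> = 2 * norm v" using assms unfolding homog_isometry_def by simp
  finally show ?thesis .
qed

lemma H_op_dist_ge:
  assumes "homog_isometry A" "homog_isometry B" "norm v \<le> 1"
  shows "norm (A v - B v) \<le> op_dist (H_sp J) A B"
proof -
  have "norm (A w - B w) \<le> 2" if "norm w \<le> 1" for w
    using homog_isometry_diff_le[OF assms(1,2), of w] that by linarith
  then have "bdd_above ((\<lambda>v. norm (A v - B v)) ` {v. norm v \<le> 1})"
    by (intro bdd_aboveI2[where M=2]) auto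
  then show ?thesis unfolding H_op_dist using assms(3) by (intro cSup_upper) auto
qed

lemma H_op_dist_le:
  assumes "\<And>v. norm v \<le> 1 \<Longrightarrow> norm (A v - B v) \<le> M"
  shows "op_dist (H_sp J) A B \<le> M"
  unfolding H_op_dist using assms by (intro cSup_least) (auto intro: exI[of _ 0])

lemma H_op_dist_bounds:
  assumes "homog_isometry A" "homog_isometry B"
  shows "0 \<le> op_dist (H_sp J) A B" "op_dist (H_sp J) A B \<le> 2"
proof -
  have "norm (A 0 - B 0) \<le> op_dist (H_sp J) A B" by (rule H_op_dist_ge[OF assms]) simp
  then show "0 \<le> op_dist (H_sp J) A B" by (meson norm_ge_zero order_trans)
  show "op_dist (H_sp J) A B \<le> 2"
  proof (rule H_op_dist_le)
    fix v :: 'a assume "norm v \<le> 1"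
    then show "norm (A v - B v) \<le> 2" using homog_isometry_diff_le[OF assms, of v] by linarith
  qed
qed

lemma H_op_dist_scaled:
  assumes A: "homog_isometry A" and B: "homog_isometry B"
  shows "norm (A v - B v) \<le> op_dist (H_sp J) A B * norm v"
proof (cases "v = 0")
  case True
  then show ?thesis using homog_isometry_zero[OF A] homog_isometry_zero[OF B] by simp
next
  case False
  define u where "u = (1 / norm v) *\<^sub>R v"
  have u: "norm u = 1" "v = norm v *\<^sub>R u" using False by (simp_all add: u_def)
  have "A v - B v = norm v *\<^sub>R (A u - B u)"
    using A B u(2) unfolding homog_isometry_def by (metis scaleR_diff_right)
  then have "norm (A v - B v) = norm v * norm (A u - B u)" by simp
  also have "\<dots> \<le> norm v * op_dist (H_sp J) A B"
    using H_op_dist_ge[OF A B] u(1) by (intro mult_left_mono) auto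
  finally show ?thesis by (simp add: mult.commute)
qed

section \<open>Operator distance on \<open>\<ell>\<^sup>2(R, H)\<close>\<close>

lemma l2_op_dist: "op_dist (l2_sp R J) U W
   = Sup ((\<lambda>f. l2norm R (\<lambda>x. U f x - W f x)) ` {f \<in> l2space R. l2norm R f \<le> 1})"
  by (simp add: op_dist_def l2_sp_def)

lemma l2_zero: "(\<lambda>x. 0) \<in> l2space R" "l2norm R (\<lambda>x. 0) = 0"
  by (auto simp: l2space_def l2norm_def)

lemma l2_op_dist_le:
  fixes U W :: "('g \<Rightarrow> 'h::real_normed_vector) \<Rightarrow> 'g \<Rightarrow> 'h"
  assumes "\<And>f. f \<in> l2space R \<Longrightarrow> l2norm R f \<le> 1 \<Longrightarrow> l2norm R (\<lambda>x. U f x - W f x) \<le> M"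
  shows "op_dist (l2_sp R J) U W \<le> M"
proof -
  have "(\<lambda>x. 0 :: 'h) \<in> {f \<in> l2space R. l2norm R f \<le> 1}" by (simp add: l2_zero)
  then show ?thesis unfolding l2_op_dist using assms by (intro cSup_least) auto
qed

lemma l2_op_dist_ge:
  fixes U W :: "('g \<Rightarrow> 'h::real_normed_vector) \<Rightarrow> 'g \<Rightarrow> 'h"
  assumes bound: "\<And>f. f \<in> l2space R \<Longrightarrow> l2norm R f \<le> 1 \<Longrightarrow> l2norm R (\<lambda>x. U f x - W f x) \<le> M"
    and f: "f \<in> l2space R" "l2norm R f \<le> 1"
  shows "l2norm R (\<lambda>x. U f x - W f x) \<le> op_dist (l2_sp R J) U W"
  unfolding l2_op_dist using f bound by (intro cSup_upper bdd_aboveI2[where M=M]) auto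

lemma l2_twisted_bound:
  fixes h f :: "'g \<Rightarrow> 'h::real_normed_vector"
  assumes \<sigma>: "bij_betw \<sigma> R R" and f: "(\<lambda>x. (norm (f x))\<^sup>2) summable_on R" and M: "M \<ge> 0"
    and h: "\<And>x. x \<in> R \<Longrightarrow> norm (h x) \<le> M * norm (f (\<sigma> x))"
  shows "l2norm R h \<le> M * l2norm R f"
proof -
  have f\<sigma>: "(\<lambda>x. (norm (f (\<sigma> x)))\<^sup>2) summable_on R"
    using summable_on_reindex_bij_betw[OF \<sigma>, of "\<lambda>x. (norm (f x))\<^sup>2"] f by simp
  have pointwise: "(norm (h x))\<^sup>2 \<le> M\<^sup>2 * (norm (f (\<sigma> x)))\<^sup>2" if "x \<in> R" for x
  proof -
    have "(norm (h x))\<^sup>2 \<le> (M * norm (f (\<sigma> x)))\<^sup>2" using h[OF that] by (intro power_mono) auto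
    then show ?thesis by (simp add: power_mult_distrib)
  qed
  have "(\<Sum>\<^sub>\<infinity>x\<in>R. (norm (h x))\<^sup>2) \<le> (\<Sum>\<^sub>\<infinity>x\<in>R. M\<^sup>2 * (norm (f (\<sigma> x)))\<^sup>2)"
  proof (cases "(\<lambda>x. (norm (h x))\<^sup>2) summable_on R")
    case True
    then show ?thesis using pointwise f\<sigma> by (intro infsum_mono summable_on_cmult_right)
  next
    case False
    then show ?thesis by (simp add: infsum_not_exists infsum_nonneg)
  qed
  also have "\<dots> = M\<^sup>2 * (\<Sum>\<^sub>\<infinity>x\<in>R. (norm (f (\<sigma> x)))\<^sup>2)"
    by (rule infsum_cmult_right[OF f\<sigma>])
  also have "(\<Sum>\<^sub>\<infinity>x\<in>R. (norm (f (\<sigma> x)))\<^sup>2) = (\<Sum>\<^sub>\<infinity>x\<in>R. (norm (f x))\<^sup>2)"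
    using infsum_reindex_bij_betw[OF \<sigma>, of "\<lambda>x. (norm (f x))\<^sup>2"] by simp
  finally have "l2norm R h \<le> sqrt (M\<^sup>2 * (\<Sum>\<^sub>\<infinity>x\<in>R. (norm (f x))\<^sup>2))"
    unfolding l2norm_def by (rule real_sqrt_le_mono)
  also have "\<dots> = M * l2norm R f" using M by (simp add: l2norm_def real_sqrt_mult)
  finally show ?thesis .
qed

lemma l2_delta:
  assumes "e \<in> R"
  shows "(\<lambda>x. if x = e then w else 0) \<in> l2space R"
    and "l2norm R (\<lambda>x. if x = e then w else 0) = norm w"
proof -
  have "(\<lambda>x. (norm (if x = e then w else 0))\<^sup>2) summable_on R \<longleftrightarrow> (\<lambda>x. (norm w)\<^sup>2) summable_on {e}"
    by (rule summable_on_cong_neutral) (use assms in auto)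
  then show "(\<lambda>x. if x = e then w else 0) \<in> l2space R" using assms by (auto simp: l2space_def)
  have "(\<Sum>\<^sub>\<infinity>x\<in>R. (norm (if x = e then w else 0))\<^sup>2) = (\<Sum>\<^sub>\<infinity>x\<in>{e}. (norm w)\<^sup>2)"
    by (rule infsum_cong_neutral) (use assms in auto)
  then show "l2norm R (\<lambda>x. if x = e then w else 0) = norm w" by (simp add: l2norm_def)
qed

text \<open>Twisted shifts: \<open>(U f - W f)(x) = A\<^sub>x (f (\<sigma> x)) - B\<^sub>x (f (\<sigma> x))\<close>.  The distance
  \<open>\<parallel>U - W\<parallel>\<close> is bounded above by the distances \<open>\<parallel>A\<^sub>x - B\<^sub>x\<parallel>\<close> \<dots>\<close>

lemma twisted_shift_op_dist_le:
  fixes A B :: "'g \<Rightarrow> 'h::real_normed_vector \<Rightarrow> 'h"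
  assumes \<sigma>: "bij_betw \<sigma> R R"
    and iso: "\<And>x. x \<in> R \<Longrightarrow> homog_isometry (A x)" "\<And>x. x \<in> R \<Longrightarrow> homog_isometry (B x)"
    and UW: "\<And>f x. f \<in> l2space R \<Longrightarrow> x \<in> R \<Longrightarrow> U f x - W f x = A x (f (\<sigma> x)) - B x (f (\<sigma> x))"
    and M: "\<And>x. x \<in> R \<Longrightarrow> op_dist (H_sp J') (A x) (B x) \<le> M" "0 \<le> M"
  shows "op_dist (l2_sp R J) U W \<le> M"
proof (rule l2_op_dist_le)
  fix f :: "'g \<Rightarrow> 'h" assume f: "f \<in> l2space R" "l2norm R f \<le> 1"
  have "norm (U f x - W f x) \<le> M * norm (f (\<sigma> x))" if x: "x \<in> R" for x
  proof -
    have "norm (U f x - W f x) \<le> op_dist (H_sp J') (A x) (B x) * norm (f (\<sigma> x))"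
      unfolding UW[OF f(1) x] by (rule H_op_dist_scaled[OF iso[OF x]])
    also have "\<dots> \<le> M * norm (f (\<sigma> x))" using M(1)[OF x] by (intro mult_right_mono) auto
    finally show ?thesis .
  qed
  then have "l2norm R (\<lambda>x. U f x - W f x) \<le> M * l2norm R f"
    using f(1) M(2) by (intro l2_twisted_bound[OF \<sigma>]) (auto simp: l2space_def)
  also have "\<dots> \<le> M" using f(2) M(2) by (simp add: mult_left_le)
  finally show "l2norm R (\<lambda>x. U f x - W f x) \<le> M" .
qed

text \<open>\<dots> and bounded below by \<open>\<parallel>A\<^sub>e - B\<^sub>e\<parallel>\<close> at a point \<open>e\<close> whose only preimage under \<open>\<sigma>\<close> is \<open>e\<close>
  itself: on functions supported at \<open>e\<close>, \<open>U - W\<close> acts as \<open>A\<^sub>e - B\<^sub>e\<close>.\<close>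

lemma twisted_shift_op_dist_ge:
  fixes A B :: "'g \<Rightarrow> 'h::real_normed_vector \<Rightarrow> 'h"
  assumes \<sigma>: "bij_betw \<sigma> R R"
    and iso: "\<And>x. x \<in> R \<Longrightarrow> homog_isometry (A x)" "\<And>x. x \<in> R \<Longrightarrow> homog_isometry (B x)"
    and UW: "\<And>f x. f \<in> l2space R \<Longrightarrow> x \<in> R \<Longrightarrow> U f x - W f x = A x (f (\<sigma> x)) - B x (f (\<sigma> x))"
    and e: "e \<in> R" "\<And>x. x \<in> R \<Longrightarrow> \<sigma> x = e \<longleftrightarrow> x = e"
  shows "op_dist (H_sp J') (A e) (B e) \<le> op_dist (l2_sp R J) U W"
proof (rule H_op_dist_le)
  fix v :: 'h assume v: "norm v \<le> 1"
  have bounded: "l2norm R (\<lambda>x. U f x - W f x) \<le> 2"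
    if f: "f \<in> l2space R" "l2norm R f \<le> 1" for f :: "'g \<Rightarrow> 'h"
  proof -
    have "norm (U f x - W f x) \<le> 2 * norm (f (\<sigma> x))" if x: "x \<in> R" for x
      using homog_isometry_diff_le[OF iso(1)[OF x] iso(2)[OF x]] by (simp add: UW[OF f(1) x])
    then have "l2norm R (\<lambda>x. U f x - W f x) \<le> 2 * l2norm R f"
      using f(1) by (intro l2_twisted_bound[OF \<sigma>]) (auto simp: l2space_def)
    then show ?thesis using f(2) by linarith
  qed
  define d where "d = (\<lambda>x. if x = e then v else 0)"
  have d: "d \<in> l2space R" "l2norm R d \<le> 1" using l2_delta[OF e(1), of v] v by (simp_all add: d_def)
  have pointwise: "U d x - W d x = (if x = e then A e v - B e v else 0)" if x: "x \<in> R" for x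
    using UW[OF d(1) x] e(2)[OF x] homog_isometry_zero[OF iso(1)[OF x]]
      homog_isometry_zero[OF iso(2)[OF x]] by (auto simp: d_def)
  have "l2norm R (\<lambda>x. U d x - W d x) = l2norm R (\<lambda>x. if x = e then A e v - B e v else 0)"
    unfolding l2norm_def by (intro arg_cong[where f = sqrt] infsum_cong) (simp add: pointwise)
  also have "\<dots> = norm (A e v - B e v)" by (rule l2_delta(2)[OF e(1)])
  finally have "norm (A e v - B e v) = l2norm R (\<lambda>x. U d x - W d x)" ..
  also have "\<dots> \<le> op_dist (l2_sp R J) U W"
    by (rule l2_op_dist_ge[OF _ d]) (rule bounded)
  finally show "norm (A e v - B e v) \<le> op_dist (l2_sp R J) U W" .
qed

text \<open>Maps of \<open>\<ell>\<^sup>2(R, H)\<close> into itself preserving the norm; both induced operators and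
  unitaries of \<open>\<ell>\<^sup>2(R, H)\<close> are of this kind, and any two of them are at distance at most 2.\<close>

definition l2_isometry :: "'g set \<Rightarrow> (('g \<Rightarrow> 'h::real_normed_vector) \<Rightarrow> ('g \<Rightarrow> 'h)) \<Rightarrow> bool" where
  "l2_isometry R U \<longleftrightarrow> (\<forall>f\<in>l2space R. U f \<in> l2space R \<and> l2norm R (U f) = l2norm R f)"

lemma unitary_l2_isometry: "unitary_op (l2_sp R J) U \<Longrightarrow> l2_isometry R U"
  by (auto simp: unitary_op_def l2_sp_def l2_isometry_def)

lemma l2_diff_le_2:
  fixes f g :: "'g \<Rightarrow> 'h::real_normed_vector"
  assumes "f \<in> l2space R" "g \<in> l2space R" "l2norm R f \<le> 1" "l2norm R g \<le> 1"
  shows "l2norm R (\<lambda>x. f x - g x) \<le> 2"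
proof -
  let ?N = "\<lambda>f. \<Sum>\<^sub>\<infinity>x\<in>R. (norm (f x))\<^sup>2"
  have sf: "(\<lambda>x. (norm (f x))\<^sup>2) summable_on R" and sg: "(\<lambda>x. (norm (g x))\<^sup>2) summable_on R"
    using assms by (auto simp: l2space_def)
  have unit: "?N f \<le> 1" if "l2norm R f \<le> 1" for f :: "'g \<Rightarrow> 'h"
    using that infsum_nonneg[of R "\<lambda>x. (norm (f x))\<^sup>2"] by (simp add: l2norm_def real_sqrt_le_1_iff)
  have pointwise: "(norm (f x - g x))\<^sup>2 \<le> 2 * (norm (f x))\<^sup>2 + 2 * (norm (g x))\<^sup>2" for x
  proof -
    have "(norm (f x - g x))\<^sup>2 \<le> (norm (f x) + norm (g x))\<^sup>2"
      using norm_triangle_ineq4 by (intro power_mono) auto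
    also have "\<dots> \<le> 2 * (norm (f x))\<^sup>2 + 2 * (norm (g x))\<^sup>2"
      using sum_squares_ge_zero[of "norm (f x) - norm (g x)" 0] by (simp add: power2_eq_square algebra_simps)
    finally show ?thesis .
  qed
  have "?N (\<lambda>x. f x - g x) \<le> (\<Sum>\<^sub>\<infinity>x\<in>R. 2 * (norm (f x))\<^sup>2 + 2 * (norm (g x))\<^sup>2)"
  proof (cases "(\<lambda>x. (norm (f x - g x))\<^sup>2) summable_on R")
    case True
    then show ?thesis
      using pointwise by (intro infsum_mono summable_on_add summable_on_cmult_right sf sg)
  next
    case False
    then show ?thesis by (simp add: infsum_not_exists infsum_nonneg)
  qed
  also have "\<dots> = 2 * ?N f + 2 * ?N g"
    using sf sg by (simp add: infsum_add summable_on_cmult_right infsum_cmult_right)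
  also have "\<dots> \<le> 4" using unit[OF assms(3)] unit[OF assms(4)] by simp
  finally have "l2norm R (\<lambda>x. f x - g x) \<le> sqrt 4" unfolding l2norm_def by (rule real_sqrt_le_mono)
  then show ?thesis by simp
qed

lemma l2_isometry_op_dist_bounds:
  assumes U: "l2_isometry R U" and W: "l2_isometry R W"
  shows "0 \<le> op_dist (l2_sp R J) U W" "op_dist (l2_sp R J) U W \<le> 2"
proof -
  have bound: "l2norm R (\<lambda>x. U f x - W f x) \<le> 2" if "f \<in> l2space R" "l2norm R f \<le> 1" for f
    using assms that unfolding l2_isometry_def by (intro l2_diff_le_2) auto
  have "l2norm R (\<lambda>x. U (\<lambda>x. 0) x - W (\<lambda>x. 0) x) \<le> op_dist (l2_sp R J) U W"
    by (rule l2_op_dist_ge[OF bound]) (simp_all add: l2_zero)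
  moreover have "0 \<le> l2norm R (\<lambda>x. U (\<lambda>x. 0) x - W (\<lambda>x. 0) x)"
    by (simp add: l2norm_def infsum_nonneg)
  ultimately show "0 \<le> op_dist (l2_sp R J) U W" by linarith
  show "op_dist (l2_sp R J) U W \<le> 2" by (rule l2_op_dist_le[OF bound])
qed

lemma bounded_family_Sup:
  fixes H :: "'k \<Rightarrow> real"
  assumes "k \<in> K" and "\<And>k. k \<in> K \<Longrightarrow> 0 \<le> H k \<and> H k \<le> c"
  shows "bdd_above (H ` K)" "0 \<le> Sup (H ` K)"
proof -
  show bdd: "bdd_above (H ` K)" using assms(2) by (intro bdd_aboveI2) blast
  show "0 \<le> Sup (H ` K)" using assms cSup_upper[OF _ bdd, of "H k"] by force
qed

lemma Sup_eq_by_domination: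
  fixes F :: "'i \<Rightarrow> real" and H :: "'k \<Rightarrow> real"
  assumes K: "K \<noteq> {}" "bdd_above (H ` K)"
    and up: "\<And>i. i \<in> I \<Longrightarrow> F i \<le> Sup (H ` K)"
    and down: "\<And>k. k \<in> K \<Longrightarrow> \<exists>i\<in>I. H k \<le> F i"
  shows "Sup (F ` I) = Sup (H ` K)"
proof (rule antisym)
  have I: "I \<noteq> {}" using K(1) down by blast
  show "Sup (F ` I) \<le> Sup (H ` K)" using I up by (intro cSup_least) auto
  have bdd: "bdd_above (F ` I)" using up by (intro bdd_aboveI2) blast
  show "Sup (H ` K) \<le> Sup (F ` I)"
  proof (rule cSup_least)
    fix y assume "y \<in> H ` K"
    then obtain i where "i \<in> I" "y \<le> F i" using down by blast
    then show "y \<le> Sup (F ` I)" using cSup_upper[OF _ bdd] order_trans by fastforce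
  qed (use K in simp)
qed

section \<open>Induced maps\<close>

context coset_transversal
begin

lemma induced_apply: "x \<in> R \<Longrightarrow> induced G L R \<mu> g f x = \<mu> (cocycle x g) (f (retr (x \<otimes> g)))"
  by (simp add: induced_def)

lemma induced_outside: "x \<notin> R \<Longrightarrow> induced G L R \<mu> g f x = 0"
  by (simp add: induced_def)

lemma induced_induced_apply:
  assumes g: "g \<in> carrier G" and d: "d \<in> carrier G" and x: "x \<in> R"
  shows "induced G L R \<mu> g (induced G L R \<mu> d f) x
     = \<mu> (cocycle x g) (\<mu> (cocycle (retr (x \<otimes> g)) d) (f (retr (x \<otimes> (g \<otimes> d)))))"
proof -
  have "retr (retr (x \<otimes> g) \<otimes> d) = retr (x \<otimes> (g \<otimes> d))"
    using retr_retr_mult R_carrier' x g d by (simp add: m_assoc)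
  then show ?thesis using g x retr_in_R R_carrier' by (simp add: induced_apply)
qed

text \<open>Since \<open>\<sigma>\<^sub>g\<close> permutes \<open>R\<close>, inducing norm-preserving maps preserves the \<open>\<ell>\<^sup>2\<close>-norm.\<close>

lemma induced_l2_isometry:
  fixes \<mu> :: "'g \<Rightarrow> 'h::real_normed_vector \<Rightarrow> 'h"
  assumes iso: "\<forall>l\<in>L. homog_isometry (\<mu> l)" and g: "g \<in> carrier G"
  shows "l2_isometry R (induced G L R \<mu> g)"
  unfolding l2_isometry_def
proof
  fix f :: "'g \<Rightarrow> 'h" assume f: "f \<in> l2space R"
  have pointwise: "(norm (induced G L R \<mu> g f x))\<^sup>2 = (norm (f (retr (x \<otimes> g))))\<^sup>2" if "x \<in> R" for x
    using iso cocycle_in_L[OF that g] by (simp add: induced_apply[OF that] homog_isometry_def)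
  have "(\<lambda>x. (norm (induced G L R \<mu> g f x))\<^sup>2) summable_on R
      \<longleftrightarrow> (\<lambda>x. (norm (f (retr (x \<otimes> g))))\<^sup>2) summable_on R"
    using pointwise by (rule summable_on_cong)
  also have "\<dots> \<longleftrightarrow> (\<lambda>x. (norm (f x))\<^sup>2) summable_on R"
    by (rule summable_on_reindex_bij_betw[OF retr_mult_bij[OF g]])
  finally have "induced G L R \<mu> g f \<in> l2space R"
    using f by (simp add: l2space_def induced_outside)
  moreover have "(\<Sum>\<^sub>\<infinity>x\<in>R. (norm (induced G L R \<mu> g f x))\<^sup>2) = (\<Sum>\<^sub>\<infinity>x\<in>R. (norm (f (retr (x \<otimes> g))))\<^sup>2)"
    using pointwise by (rule infsum_cong)
  moreover have "\<dots> = (\<Sum>\<^sub>\<infinity>x\<in>R. (norm (f x))\<^sup>2)"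
    by (rule infsum_reindex_bij_betw[OF retr_mult_bij[OF g]])
  ultimately show "induced G L R \<mu> g f \<in> l2space R \<and> l2norm R (induced G L R \<mu> g f) = l2norm R f"
    by (simp add: l2norm_def)
qed

section \<open>Distance between induced maps\<close>

text \<open>\<open>\<mu>\<^sub>1-bar(g) - \<mu>\<^sub>2-bar(g)\<close> is a twisted shift with coefficients \<open>\<mu>\<^sub>1(c(x,g)) - \<mu>\<^sub>2(c(x,g))\<close>,
  which for \<open>g = l \<in> L\<close> and \<open>x = e\<close> is \<open>\<mu>\<^sub>1(l) - \<mu>\<^sub>2(l)\<close>.\<close>

lemma induced_op_dist_le:
  fixes \<mu>1 \<mu>2 :: "'g \<Rightarrow> 'h::real_normed_vector \<Rightarrow> 'h"
  assumes iso: "\<forall>l\<in>L. homog_isometry (\<mu>1 l)" "\<forall>l\<in>L. homog_isometry (\<mu>2 l)"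
    and M: "\<forall>l\<in>L. op_dist (H_sp J') (\<mu>1 l) (\<mu>2 l) \<le> M" "0 \<le> M" and g: "g \<in> carrier G"
  shows "op_dist (l2_sp R J) (induced G L R \<mu>1 g) (induced G L R \<mu>2 g) \<le> M"
  using cocycle_in_L[OF _ g] iso M
  by (intro twisted_shift_op_dist_le[OF retr_mult_bij[OF g],
        where A = "\<lambda>x. \<mu>1 (cocycle x g)" and B = "\<lambda>x. \<mu>2 (cocycle x g)"])
     (auto simp: induced_apply)

lemma induced_op_dist_ge:
  fixes \<mu>1 \<mu>2 :: "'g \<Rightarrow> 'h::real_normed_vector \<Rightarrow> 'h"
  assumes iso: "\<forall>l\<in>L. homog_isometry (\<mu>1 l)" "\<forall>l\<in>L. homog_isometry (\<mu>2 l)" and l: "l \<in> L"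
  shows "op_dist (H_sp J') (\<mu>1 l) (\<mu>2 l) \<le> op_dist (l2_sp R J) (induced G L R \<mu>1 l) (induced G L R \<mu>2 l)"
  using twisted_shift_op_dist_ge[OF retr_mult_bij[OF L_carrier[OF l]],
      where A = "\<lambda>x. \<mu>1 (cocycle x l)" and B = "\<lambda>x. \<mu>2 (cocycle x l)" and e = \<one>]
    cocycle_in_L[OF _ L_carrier[OF l]] iso one_in_R retr_mult_eq_one_iff[OF _ l] cocycle_one_L[OF l]
  by (auto simp: induced_apply)

theorem map_dist_induced:
  fixes \<mu>1 \<mu>2 :: "'g \<Rightarrow> 'h::real_normed_vector \<Rightarrow> 'h"
  assumes iso: "\<forall>l\<in>L. homog_isometry (\<mu>1 l)" "\<forall>l\<in>L. homog_isometry (\<mu>2 l)"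
  shows "map_dist (l2_sp R J) G (induced G L R \<mu>1) (induced G L R \<mu>2)
      = map_dist (H_sp J) (G\<lparr>carrier := L\<rparr>) \<mu>1 \<mu>2"
proof -
  let ?d = "\<lambda>l. op_dist (H_sp J) (\<mu>1 l) (\<mu>2 l)"
  have "0 \<le> ?d l \<and> ?d l \<le> 2" if "l \<in> L" for l
    using H_op_dist_bounds iso that by blast
  then have bounds: "bdd_above (?d ` L)" "0 \<le> Sup (?d ` L)"
    using bounded_family_Sup[OF one_in_L, of ?d 2] by auto
  have "Sup ((\<lambda>g. op_dist (l2_sp R J) (induced G L R \<mu>1 g) (induced G L R \<mu>2 g)) ` carrier G)
      = Sup (?d ` L)"
  proof (rule Sup_eq_by_domination)
    show "op_dist (l2_sp R J) (induced G L R \<mu>1 g) (induced G L R \<mu>2 g) \<le> Sup (?d ` L)"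
      if "g \<in> carrier G" for g
      using cSup_upper[OF _ bounds(1)] bounds(2) that by (intro induced_op_dist_le[OF iso]) auto
    show "\<exists>g\<in>carrier G. ?d l \<le> op_dist (l2_sp R J) (induced G L R \<mu>1 g) (induced G L R \<mu>2 g)"
      if "l \<in> L" for l
      using that L_carrier induced_op_dist_ge[OF iso that] by blast
  qed (use one_in_L bounds in auto)
  then show ?thesis by (simp add: map_dist_def)
qed

section \<open>Defect of induced maps\<close>

text \<open>By the cocycle identity, \<open>\<mu>-bar(g d) - \<mu>-bar(g) \<mu>-bar(d)\<close> is a twisted shift with coefficients
  \<open>\<mu>(a b) - \<mu>(a) \<mu>(b)\<close> for \<open>a = c(x,g)\<close>, \<open>b = c(r(x g),d)\<close>; for \<open>g, d \<in> L\<close> and \<open>x = e\<close> these are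
  \<open>a = g\<close>, \<open>b = d\<close>.\<close>

lemma induced_mult_diff_apply:
  assumes g: "g \<in> carrier G" and d: "d \<in> carrier G" and x: "x \<in> R"
  shows "induced G L R \<mu> (g \<otimes> d) f x - (induced G L R \<mu> g \<circ> induced G L R \<mu> d) f x
    = \<mu> (cocycle x g \<otimes> cocycle (retr (x \<otimes> g)) d) (f (retr (x \<otimes> (g \<otimes> d))))
      - (\<mu> (cocycle x g) \<circ> \<mu> (cocycle (retr (x \<otimes> g)) d)) (f (retr (x \<otimes> (g \<otimes> d))))"
proof -
  have "induced G L R \<mu> (g \<otimes> d) f x
      = \<mu> (cocycle x g \<otimes> cocycle (retr (x \<otimes> g)) d) (f (retr (x \<otimes> (g \<otimes> d))))"
    unfolding cocycle_mult[OF x g d] by (rule induced_apply[OF x])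
  moreover have "(induced G L R \<mu> g \<circ> induced G L R \<mu> d) f x
      = (\<mu> (cocycle x g) \<circ> \<mu> (cocycle (retr (x \<otimes> g)) d)) (f (retr (x \<otimes> (g \<otimes> d))))"
    unfolding comp_apply by (rule induced_induced_apply[OF g d x])
  ultimately show ?thesis by (simp only:)
qed

lemma induced_defect_le:
  fixes \<mu> :: "'g \<Rightarrow> 'h::real_normed_vector \<Rightarrow> 'h"
  assumes iso: "\<forall>l\<in>L. homog_isometry (\<mu> l)"
    and M: "\<forall>a\<in>L. \<forall>b\<in>L. op_dist (H_sp J') (\<mu> (a \<otimes> b)) (\<mu> a \<circ> \<mu> b) \<le> M" "0 \<le> M"
    and g: "g \<in> carrier G" and d: "d \<in> carrier G"
  shows "op_dist (l2_sp R J) (induced G L R \<mu> (g \<otimes> d)) (induced G L R \<mu> g \<circ> induced G L R \<mu> d) \<le> M"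
proof -
  let ?a = "\<lambda>x. cocycle x g" and ?b = "\<lambda>x. cocycle (retr (x \<otimes> g)) d"
  have ab: "?a x \<in> L" "?b x \<in> L" if "x \<in> R" for x
    using cocycle_in_L[OF that g] cocycle_in_L[OF retr_in_R[OF m_closed[OF R_carrier'[OF that] g]] d]
    by auto
  show ?thesis
  proof (rule twisted_shift_op_dist_le[OF retr_mult_bij[OF m_closed[OF g d]],
        where A = "\<lambda>x. \<mu> (?a x \<otimes> ?b x)" and B = "\<lambda>x. \<mu> (?a x) \<circ> \<mu> (?b x)"])
    show "homog_isometry (\<mu> (?a x \<otimes> ?b x))" if "x \<in> R" for x
      using iso L_mult ab[OF that] by blast
    show "homog_isometry (\<mu> (?a x) \<circ> \<mu> (?b x))" if "x \<in> R" for x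
      using iso ab[OF that] by (blast intro: homog_isometry_comp)
    show "op_dist (H_sp J') (\<mu> (?a x \<otimes> ?b x)) (\<mu> (?a x) \<circ> \<mu> (?b x)) \<le> M" if "x \<in> R" for x
      using M(1) ab[OF that] by blast
    show "induced G L R \<mu> (g \<otimes> d) f x - (induced G L R \<mu> g \<circ> induced G L R \<mu> d) f x
        = \<mu> (?a x \<otimes> ?b x) (f (retr (x \<otimes> (g \<otimes> d)))) - (\<mu> (?a x) \<circ> \<mu> (?b x)) (f (retr (x \<otimes> (g \<otimes> d))))"
      if "f \<in> l2space R" "x \<in> R" for f x
      by (rule induced_mult_diff_apply[OF g d that(2)])
  qed (rule M(2))
qed

lemma induced_defect_ge:
  fixes \<mu> :: "'g \<Rightarrow> 'h::real_normed_vector \<Rightarrow> 'h"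
  assumes iso: "\<forall>l\<in>L. homog_isometry (\<mu> l)" and a: "a \<in> L" and b: "b \<in> L"
  shows "op_dist (H_sp J') (\<mu> (a \<otimes> b)) (\<mu> a \<circ> \<mu> b)
    \<le> op_dist (l2_sp R J) (induced G L R \<mu> (a \<otimes> b)) (induced G L R \<mu> a \<circ> induced G L R \<mu> b)"
proof -
  let ?a = "\<lambda>x. cocycle x a" and ?b = "\<lambda>x. cocycle (retr (x \<otimes> a)) b"
  have ac: "a \<in> carrier G" and bc: "b \<in> carrier G" using a b L_carrier by auto
  have ab: "?a x \<in> L" "?b x \<in> L" if "x \<in> R" for x
    using cocycle_in_L[OF that ac] cocycle_in_L[OF retr_in_R[OF m_closed[OF R_carrier'[OF that] ac]] bc]
    by auto
  have at_one: "?a \<one> = a" "?b \<one> = b"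
    using cocycle_one_L[OF a] retr_one_L[OF a] cocycle_one_L[OF b] by simp_all
  have "op_dist (H_sp J') (\<mu> (?a \<one> \<otimes> ?b \<one>)) (\<mu> (?a \<one>) \<circ> \<mu> (?b \<one>))
    \<le> op_dist (l2_sp R J) (induced G L R \<mu> (a \<otimes> b)) (induced G L R \<mu> a \<circ> induced G L R \<mu> b)"
  proof (rule twisted_shift_op_dist_ge[OF retr_mult_bij[OF m_closed[OF ac bc]] _ _ _ one_in_R,
        where A = "\<lambda>x. \<mu> (?a x \<otimes> ?b x)" and B = "\<lambda>x. \<mu> (?a x) \<circ> \<mu> (?b x)"])
    show "homog_isometry (\<mu> (?a x \<otimes> ?b x))" if "x \<in> R" for x
      using iso L_mult ab[OF that] by blast
    show "homog_isometry (\<mu> (?a x) \<circ> \<mu> (?b x))" if "x \<in> R" for x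
      using iso ab[OF that] by (blast intro: homog_isometry_comp)
    show "induced G L R \<mu> (a \<otimes> b) f x - (induced G L R \<mu> a \<circ> induced G L R \<mu> b) f x
        = \<mu> (?a x \<otimes> ?b x) (f (retr (x \<otimes> (a \<otimes> b)))) - (\<mu> (?a x) \<circ> \<mu> (?b x)) (f (retr (x \<otimes> (a \<otimes> b))))"
      if "f \<in> l2space R" "x \<in> R" for f x
      by (rule induced_mult_diff_apply[OF ac bc that(2)])
    show "retr (x \<otimes> (a \<otimes> b)) = \<one> \<longleftrightarrow> x = \<one>" if "x \<in> R" for x
      by (rule retr_mult_eq_one_iff[OF that L_mult[OF a b]])
  qed
  then show ?thesis by (simp only: at_one)
qed

theorem defect_induced:
  fixes \<mu> :: "'g \<Rightarrow> 'h::real_normed_vector \<Rightarrow> 'h"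
  assumes iso: "\<forall>l\<in>L. homog_isometry (\<mu> l)"
  shows "defect (l2_sp R J) G (induced G L R \<mu>) = defect (H_sp J) (G\<lparr>carrier := L\<rparr>) \<mu>"
proof -
  let ?d = "\<lambda>(a, b). op_dist (H_sp J) (\<mu> (a \<otimes> b)) (\<mu> a \<circ> \<mu> b)"
  have iso_ab: "homog_isometry (\<mu> (a \<otimes> b))" "homog_isometry (\<mu> a \<circ> \<mu> b)"
    if "a \<in> L" "b \<in> L" for a b
    using iso L_mult[OF that] that by (blast, blast intro: homog_isometry_comp)
  have "\<forall>a\<in>L. \<forall>b\<in>L. 0 \<le> ?d (a, b) \<and> ?d (a, b) \<le> 2"
    using H_op_dist_bounds[OF iso_ab] by simp
  then have bounds: "bdd_above (?d ` (L \<times> L))" "0 \<le> Sup (?d ` (L \<times> L))"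
    using bounded_family_Sup[of "(\<one>, \<one>)" "L \<times> L" ?d 2] one_in_L by auto
  have "Sup ((\<lambda>(g, d). op_dist (l2_sp R J) (induced G L R \<mu> (g \<otimes> d))
        (induced G L R \<mu> g \<circ> induced G L R \<mu> d)) ` (carrier G \<times> carrier G))
      = Sup (?d ` (L \<times> L))"
  proof (rule Sup_eq_by_domination)
    fix p assume "p \<in> carrier G \<times> carrier G"
    then obtain g d where p: "p = (g, d)" "g \<in> carrier G" "d \<in> carrier G" by blast
    have "\<forall>a\<in>L. \<forall>b\<in>L. ?d (a, b) \<le> Sup (?d ` (L \<times> L))"
      using cSup_upper[OF _ bounds(1)] by auto
    then show "(\<lambda>(g, d). op_dist (l2_sp R J) (induced G L R \<mu> (g \<otimes> d))
        (induced G L R \<mu> g \<circ> induced G L R \<mu> d)) p \<le> Sup (?d ` (L \<times> L))"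
      unfolding p(1) using induced_defect_le[OF iso _ bounds(2) p(2,3)] by simp
  next
    fix q assume "q \<in> L \<times> L"
    then obtain a b where q: "q = (a, b)" "a \<in> L" "b \<in> L" by blast
    then have "(a, b) \<in> carrier G \<times> carrier G" using L_carrier by blast
    then show "\<exists>p\<in>carrier G \<times> carrier G. ?d q \<le> (\<lambda>(g, d). op_dist (l2_sp R J) (induced G L R \<mu> (g \<otimes> d))
        (induced G L R \<mu> g \<circ> induced G L R \<mu> d)) p"
      unfolding q(1) using induced_defect_ge[OF iso q(2,3)] by (intro bexI[of _ "(a, b)"]) simp_all
  qed (use one_in_L bounds in auto)
  then show ?thesis by (simp add: defect_def)
qed

section \<open>Inducing unitary representations\<close>

text \<open>If \<open>\<nu>\<close> is multiplicative on \<open>L\<close>, then so is the induced map on \<open>G\<close>, by the cocycle identity.\<close>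

lemma induced_mult:
  assumes mult: "\<And>a b v. a \<in> L \<Longrightarrow> b \<in> L \<Longrightarrow> \<nu> (a \<otimes> b) v = \<nu> a (\<nu> b v)"
    and g: "g \<in> carrier G" and d: "d \<in> carrier G"
  shows "induced G L R \<nu> (g \<otimes> d) f = induced G L R \<nu> g (induced G L R \<nu> d f)"
proof
  fix x show "induced G L R \<nu> (g \<otimes> d) f x = induced G L R \<nu> g (induced G L R \<nu> d f) x"
  proof (cases "x \<in> R")
    case x: True
    have a: "cocycle x g \<in> L" and b: "cocycle (retr (x \<otimes> g)) d \<in> L"
      using cocycle_in_L x g d retr_in_R R_carrier' by auto
    have "induced G L R \<nu> g (induced G L R \<nu> d f) x
        = \<nu> (cocycle x g) (\<nu> (cocycle (retr (x \<otimes> g)) d) (f (retr (x \<otimes> (g \<otimes> d)))))"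
      by (rule induced_induced_apply[OF g d x])
    also have "\<dots> = \<nu> (cocycle x (g \<otimes> d)) (f (retr (x \<otimes> (g \<otimes> d))))"
      unfolding mult[OF a b, symmetric] cocycle_mult[OF x g d] ..
    also have "\<dots> = induced G L R \<nu> (g \<otimes> d) f x" by (rule induced_apply[OF x, symmetric])
    finally show ?thesis by simp
  next
    case False
    then show ?thesis by (simp add: induced_outside)
  qed
qed

lemma induced_one:
  assumes one: "\<And>v. \<nu> \<one> v = v" and f: "f \<in> l2space R"
  shows "induced G L R \<nu> \<one> f = f"
proof
  fix x show "induced G L R \<nu> \<one> f x = f x"
  proof (cases "x \<in> R")
    case x: True
    have r: "retr (x \<otimes> \<one>) = x" using R_carrier'[OF x] retr_R[OF x] by simp
    have "induced G L R \<nu> \<one> f x = \<nu> (cocycle x \<one>) (f (retr (x \<otimes> \<one>)))"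
      by (rule induced_apply[OF x])
    also have "\<dots> = \<nu> \<one> (f x)" unfolding r using R_carrier'[OF x] by simp
    finally show ?thesis using one by simp
  next
    case False
    then show ?thesis using f by (simp add: induced_outside l2space_def)
  qed
qed

lemma induced_unitary_op:
  fixes \<nu> :: "'g \<Rightarrow> 'h::real_normed_vector \<Rightarrow> 'h"
  assumes u: "\<forall>l\<in>L. unitary_op (H_sp J) (\<nu> l)" and J0: "J 0 = 0" and g: "g \<in> carrier G"
    and onto: "l2space R \<subseteq> induced G L R \<nu> g ` l2space R"
  shows "unitary_op (l2_sp R J) (induced G L R \<nu> g)"
proof -
  let ?U = "induced G L R \<nu> g"
  have add: "\<nu> l (v + w) = \<nu> l v + \<nu> l w" and scale: "\<nu> l (r *\<^sub>R v) = r *\<^sub>R \<nu> l v"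
    and cplx: "\<nu> l (J v) = J (\<nu> l v)" if "l \<in> L" for l v w r
    using u that by (simp_all add: unitary_op_def H_sp_def)
  have pres: "l2_isometry R ?U"
    using u unitary_homog_isometry by (intro induced_l2_isometry[OF _ g]) blast
  then have "?U ` l2space R = l2space R" using onto by (auto simp: l2_isometry_def)
  moreover have "?U (\<lambda>x. f x + h x) = (\<lambda>x. ?U f x + ?U h x)" for f h
    using add[OF cocycle_in_L[OF _ g]] by (auto simp: induced_def)
  moreover have "?U (\<lambda>x. r *\<^sub>R f x) = (\<lambda>x. r *\<^sub>R ?U f x)" for r f
    using scale[OF cocycle_in_L[OF _ g]] by (auto simp: induced_def)
  moreover have "?U (\<lambda>x. J (f x)) = (\<lambda>x. J (?U f x))" for f
    using cplx[OF cocycle_in_L[OF _ g]] J0 by (auto simp: induced_def)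
  ultimately show ?thesis using pres by (simp add: unitary_op_def l2_sp_def l2_isometry_def)
qed

theorem induced_unitary_rep:
  fixes \<nu> :: "'g \<Rightarrow> 'h::real_normed_vector \<Rightarrow> 'h"
  assumes rep: "unitary_rep (H_sp J) (G\<lparr>carrier := L\<rparr>) \<nu>" and J0: "J 0 = 0"
  shows "unitary_rep (l2_sp R J) G (induced G L R \<nu>)"
proof -
  have u: "\<forall>l\<in>L. unitary_op (H_sp J) (\<nu> l)"
    and mult: "\<And>a b v. a \<in> L \<Longrightarrow> b \<in> L \<Longrightarrow> \<nu> (a \<otimes> b) v = \<nu> a (\<nu> b v)"
    using rep by (simp_all add: unitary_rep_def H_sp_def)
  have one: "\<nu> \<one> v = v" for v
  proof -
    have "range (\<nu> \<one>) = UNIV" using u one_in_L by (simp add: unitary_op_def H_sp_def)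
    then obtain w where "v = \<nu> \<one> w" by (metis UNIV_I imageE)
    then show ?thesis using mult[OF one_in_L one_in_L, of w] by simp
  qed
  have onto: "l2space R \<subseteq> induced G L R \<nu> g ` l2space R" if g: "g \<in> carrier G" for g
  proof
    fix h :: "'g \<Rightarrow> 'h" assume h: "h \<in> l2space R"
    have "induced G L R \<nu> (inv g) h \<in> l2space R"
      using u unitary_homog_isometry h induced_l2_isometry[OF _ inv_closed[OF g], of \<nu>]
      by (auto simp: l2_isometry_def)
    moreover have "induced G L R \<nu> g (induced G L R \<nu> (inv g) h) = h"
      using induced_mult[OF mult g inv_closed[OF g], symmetric] induced_one[of \<nu>, OF one h] g by simp
    ultimately show "h \<in> induced G L R \<nu> g ` l2space R" by (metis image_eqI)
  qed
  show ?thesis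
    using induced_unitary_op[OF u J0 _ onto] induced_mult[OF mult]
    by (simp add: unitary_rep_def l2_sp_def)
qed

section \<open>Distance to unitary representations\<close>

text \<open>Every unitary representation \<open>\<nu>\<close> of \<open>L\<close> induces one of \<open>G\<close>, at the same distance from the
  induced map by \<open>map_dist_induced\<close>; hence \<open>D(\<mu>-bar) \<le> D(\<mu>)\<close>.\<close>

theorem dist_rep_induced_le:
  fixes \<mu> :: "'g \<Rightarrow> 'h::real_normed_vector \<Rightarrow> 'h"
  assumes iso: "\<forall>l\<in>L. homog_isometry (\<mu> l)" and J0: "J 0 = 0"
  shows "dist_rep (l2_sp R J) G (induced G L R \<mu>) \<le> dist_rep (H_sp J) (G\<lparr>carrier := L\<rparr>) \<mu>"
proof -
  let ?D = "\<lambda>\<nu>. map_dist (l2_sp R J) G (induced G L R \<mu>) \<nu>"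
  have bdd: "bdd_below (?D ` {\<nu>. unitary_rep (l2_sp R J) G \<nu>})"
  proof (rule bdd_belowI2[where m = 0])
    fix \<nu> assume "\<nu> \<in> {\<nu>. unitary_rep (l2_sp R J) G \<nu>}"
    then have "l2_isometry R (\<nu> g)" if "g \<in> carrier G" for g
      using that by (intro unitary_l2_isometry[of R J]) (simp add: unitary_rep_def)
    then have "0 \<le> op_dist (l2_sp R J) (induced G L R \<mu> g) (\<nu> g)
        \<and> op_dist (l2_sp R J) (induced G L R \<mu> g) (\<nu> g) \<le> 2" if "g \<in> carrier G" for g
      using l2_isometry_op_dist_bounds[OF induced_l2_isometry[OF iso that]] that by blast
    then show "0 \<le> ?D \<nu>"
      unfolding map_dist_def by (rule bounded_family_Sup(2)[OF one_closed])
  qed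
  have trivial_rep: "unitary_rep (H_sp J) (G\<lparr>carrier := L\<rparr>) (\<lambda>_. id)"
    by (simp add: unitary_rep_def unitary_op_def H_sp_def)
  show ?thesis unfolding dist_rep_def
  proof (rule cInf_greatest)
    show "(\<lambda>\<nu>. map_dist (H_sp J) (G\<lparr>carrier := L\<rparr>) \<mu> \<nu>) ` {\<nu>. unitary_rep (H_sp J) (G\<lparr>carrier := L\<rparr>) \<nu>} \<noteq> {}"
      using trivial_rep by blast
  next
    fix y assume "y \<in> (\<lambda>\<nu>. map_dist (H_sp J) (G\<lparr>carrier := L\<rparr>) \<mu> \<nu>)
        ` {\<nu>. unitary_rep (H_sp J) (G\<lparr>carrier := L\<rparr>) \<nu>}"
    then obtain \<nu> where rep: "unitary_rep (H_sp J) (G\<lparr>carrier := L\<rparr>) \<nu>"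
      and y: "y = map_dist (H_sp J) (G\<lparr>carrier := L\<rparr>) \<mu> \<nu>" by blast
    have "\<forall>l\<in>L. homog_isometry (\<nu> l)"
      using rep unitary_homog_isometry[of J] by (simp add: unitary_rep_def)
    then have "y = ?D (induced G L R \<nu>)" using map_dist_induced[OF iso] y by simp
    moreover have "unitary_rep (l2_sp R J) G (induced G L R \<nu>)"
      by (rule induced_unitary_rep[OF rep J0])
    ultimately show "Inf (?D ` {\<nu>. unitary_rep (l2_sp R J) G \<nu>}) \<le> y"
      using cInf_lower[OF _ bdd] by simp
  qed
qed

end

theorem lemma1p4:
  fixes G :: "('g, 'b) monoid_scheme"
    and L R :: "'g set"
    and J :: "'h::{real_inner, complete_space} \<Rightarrow> 'h"
    and \<mu> \<mu>1 \<mu>2 :: "'g \<Rightarrow> 'h \<Rightarrow> 'h"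
  assumes "group G"
    and "subgroup L G"
    and "R \<subseteq> carrier G"
    and "\<forall>g\<in>carrier G. \<exists>!r. r \<in> R \<and> r \<in> L #>\<^bsub>G\<^esub> g"
    and "\<one>\<^bsub>G\<^esub> \<in> R"
    and "complex_structure J"
    and "\<forall>l\<in>L. unitary_op (H_sp J) (\<mu> l)"
    and "\<forall>l\<in>L. unitary_op (H_sp J) (\<mu>1 l)"
    and "\<forall>l\<in>L. unitary_op (H_sp J) (\<mu>2 l)"
  shows "defect (l2_sp R J) G (induced G L R \<mu>) = defect (H_sp J) (G\<lparr>carrier := L\<rparr>) \<mu>
    \<and> map_dist (l2_sp R J) G (induced G L R \<mu>1) (induced G L R \<mu>2)
        = map_dist (H_sp J) (G\<lparr>carrier := L\<rparr>) \<mu>1 \<mu>2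
    \<and> dist_rep (l2_sp R J) G (induced G L R \<mu>) \<le> dist_rep (H_sp J) (G\<lparr>carrier := L\<rparr>) \<mu>"
proof -
  interpret coset_transversal G L R
    using assms(1-5) by (intro coset_transversal.intro coset_transversal_axioms.intro)
  have iso: "\<forall>l\<in>L. homog_isometry (\<mu> l)" "\<forall>l\<in>L. homog_isometry (\<mu>1 l)"
    "\<forall>l\<in>L. homog_isometry (\<mu>2 l)"
    using assms(7-9) unitary_homog_isometry by blast+
  have "J 0 = 0" using assms(6) by (simp add: complex_structure_def linear_0)
  then show ?thesis
    using defect_induced[OF iso(1)] map_dist_induced[OF iso(2,3)] dist_rep_induced_le[OF iso(1)]
    by blast
qed

end
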